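(* Let $x_1\in(0,1)$ and define $x_{n+1}=\frac{(1+x_n)^2}{4}$ for $n\ge1$. Then $\sum_{n\ge1}n(x_{n+1}-x_n)=+\infty$. *)

theory Defs
  imports "HOL-Analysis.Analysis"
begin

end

theory Submission
  imports Defs
begin

text \<open>With \<open>y\<^sub>n = 1 - x\<^sub>n\<close> the recursion becomes \<open>y\<^sub>n\<^sub>+\<^sub>1 = y\<^sub>n - y\<^sub>n\<^sup>2/4\<close>, and
  \<open>x\<^sub>n\<^sub>+\<^sub>1 - x\<^sub>n = y\<^sub>n\<^sup>2/4\<close>. Since \<open>y \<mapsto> y - y\<^sup>2/4\<close> is increasing on \<open>[0, 2]\<close> and maps
  \<open>c/n\<close> above \<open>c/(n+1)\<close>, induction gives \<open>y\<^sub>n \<ge> y\<^sub>1/n\<close>. Hence the \<open>n\<close>-th term of the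
  series is at least \<open>y\<^sub>1\<^sup>2/(4n)\<close>, and the series diverges like the harmonic series.\<close>

lemma decrement_square_mono:
  fixes y z :: real
  assumes "0 \<le> z" "z \<le> y" "y \<le> 2"
  shows "z - z\<^sup>2/4 \<le> y - y\<^sup>2/4"
proof -
  have "y\<^sup>2 - z\<^sup>2 = (y - z) * (y + z)"
    by (simp add: power2_eq_square algebra_simps)
  also have "\<dots> \<le> (y - z) * 4"
    using assms by (intro mult_left_mono) auto
  finally show ?thesis by simp
qed

lemma decrement_square_le_one:
  fixes y :: real
  shows "y - y\<^sup>2/4 \<le> 1"
proof -
  have "y - y\<^sup>2/4 = 1 - (1 - y/2)\<^sup>2"
    by (simp add: power2_eq_square algebra_simps)
  then show ?thesis by simp
qed

lemma decrement_square_inverse_nat: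
  fixes c :: real
  assumes "0 \<le> c" "c \<le> 2" "n \<ge> 1"
  shows "c / real (Suc n) \<le> c / real n - (c / real n)\<^sup>2/4"
proof -
  have n: "real n \<ge> 1" using assms(3) by simp
  have "c * (real n + 1) \<le> 2 * (real n + 1)"
    using assms(2) by (intro mult_right_mono) auto
  also have "\<dots> \<le> 4 * real n"
    using n by simp
  finally have "c * (c * (real n + 1)) \<le> c * (4 * real n)"
    using assms(1) by (rule mult_left_mono)
  then show ?thesis
    using n by (simp add: field_simps power2_eq_square)
qed

lemma decrement_square_iteration_ge_inverse:
  fixes y :: "nat \<Rightarrow> real"
  assumes "0 \<le> y 1" "y 1 \<le> 2"
    and step: "\<And>n. n \<ge> 1 \<Longrightarrow> y (Suc n) = y n - (y n)\<^sup>2/4"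
    and "n \<ge> 1"
  shows "y 1 / real n \<le> y n \<and> y n \<le> 2"
  using \<open>n \<ge> 1\<close>
proof (induction n rule: dec_induct)
  case base
  then show ?case using assms(2) by simp
next
  case (step n)
  have "y 1 / real n - (y 1 / real n)\<^sup>2/4 \<le> y n - (y n)\<^sup>2/4"
    using step.IH assms(1) by (intro decrement_square_mono) auto
  then have "y 1 / real (Suc n) \<le> y (Suc n)"
    using decrement_square_inverse_nat[OF assms(1,2) step.hyps(1)] assms(3)[OF step.hyps(1)]
    by linarith
  moreover have "y (Suc n) \<le> 2"
    using decrement_square_le_one[of "y n"] assms(3)[OF step.hyps(1)] by linarith
  ultimately show ?case by blast
qed

lemma sum_diverges_if_ge_harmonic:
  fixes f :: "nat \<Rightarrow> real"
  assumes "0 < a" and "\<And>n. n \<ge> 1 \<Longrightarrow> a / real n \<le> f n"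
  shows "filterlim (\<lambda>N. \<Sum>n=1..N. f n) at_top sequentially"
proof (rule filterlim_at_top_mono)
  show "filterlim (\<lambda>N. a * harm N) at_top sequentially"
    using assms(1) by (intro filterlim_tendsto_pos_mult_at_top[OF tendsto_const _ harm_at_top])
  show "\<forall>\<^sub>F N in sequentially. a * harm N \<le> (\<Sum>n=1..N. f n)"
  proof (intro always_eventually allI)
    fix N
    have "a * harm N = (\<Sum>n=1..N. a / real n)"
      by (simp add: harm_def sum_distrib_left divide_inverse)
    also have "\<dots> \<le> (\<Sum>n=1..N. f n)"
      by (intro sum_mono assms(2)) auto
    finally show "a * harm N \<le> (\<Sum>n=1..N. f n)" .
  qed
qed

theorem lemma5p1:
  fixes x :: "nat \<Rightarrow> real"
  assumes "0 < x 1" and "x 1 < 1"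
    and "\<And>n. n \<ge> 1 \<Longrightarrow> x (n + 1) = (1 + x n)^2 / 4"
  shows "filterlim (\<lambda>N. \<Sum>n=1..N. real n * (x (n + 1) - x n)) at_top sequentially"
proof -
  define y where "y n = 1 - x n" for n
  have increment: "x (n + 1) - x n = (y n)\<^sup>2/4" if "n \<ge> 1" for n
    using assms(3)[OF that] by (simp add: y_def power2_eq_square field_simps)
  have "y (Suc n) = y n - (y n)\<^sup>2/4" if "n \<ge> 1" for n
    using increment[OF that] by (simp add: y_def)
  then have y_ge: "y 1 / real n \<le> y n" if "n \<ge> 1" for n
    using decrement_square_iteration_ge_inverse[of y n] assms(1,2) that
    by (simp add: y_def)
  show ?thesis
  proof (rule sum_diverges_if_ge_harmonic)
    show "0 < (y 1)\<^sup>2/4" using assms(2) by (simp add: y_def)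
    fix n :: nat
    assume n: "n \<ge> 1"
    have "(y 1 / real n)\<^sup>2 \<le> (y n)\<^sup>2"
      using y_ge[OF n] assms(2) by (intro power_mono) (auto simp: y_def)
    then have "(y 1)\<^sup>2/4 / real n \<le> real n * ((y n)\<^sup>2/4)"
      using n by (simp add: field_simps power2_eq_square)
    then show "(y 1)\<^sup>2/4 / real n \<le> real n * (x (n + 1) - x n)"
      by (simp only: increment[OF n])
  qed
qed

end
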